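(* Let $a(j,x)\ge0$, $j=1,\dots,N$, be densities with respect to $\mu$, $b\ge0$ a function, and $\beta_j=\int a(j,x)b(x)\,d\mu(x)$. Let $(\rho(j,\cdot))_{j}$ be proposal densities and $M_j\ge\sup_x a(j,x)b(x)/\rho(j,x)$ bounds, and let $(\tau_j)$ be a probability distribution on $\{1,\dots,N\}$ with all $\tau_j>0$. Consider the accept–reject scheme which draws $J\sim(\tau_j)$, then $X\sim\rho(J,\cdot)$, and accepts $(J,X)=(j,x)$ with probability $\pi(j,x)=\frac{a(j,x)b(x)}{M\tau_j\rho(j,x)}$, where $M=\max_j M_j/\tau_j$. Then the average acceptance probability is at most $\sum_j\beta_j/\sum_jM_j$, with equality if and only if $\tau_j\propto M_j$.
   Context: The scheme targets the density $f^N(x)\propto b(x)\sum_{j=1}^Na(j,x)$; the average acceptance probability is $\sum_j\int\pi(j,x)\tau_j\rho(j,x)\,d\mu(x)$. *)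

theory Defs
  imports "HOL-Analysis.Analysis"
begin

definition Mmax :: "nat \<Rightarrow> (nat \<Rightarrow> real) \<Rightarrow> (nat \<Rightarrow> real) \<Rightarrow> real" where
  "Mmax N Mb \<tau> = Max ((\<lambda>j. Mb j / \<tau> j) ` {1..N})"

definition accept_prob ::
  "nat \<Rightarrow> (nat \<Rightarrow> 'a \<Rightarrow> real) \<Rightarrow> ('a \<Rightarrow> real) \<Rightarrow> (nat \<Rightarrow> 'a \<Rightarrow> real)
     \<Rightarrow> (nat \<Rightarrow> real) \<Rightarrow> (nat \<Rightarrow> real) \<Rightarrow> nat \<Rightarrow> 'a \<Rightarrow> real" where
  "accept_prob N a b \<rho> Mb \<tau> j x = a j x * b x / (Mmax N Mb \<tau> * \<tau> j * \<rho> j x)"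

definition avg_accept ::
  "'a measure \<Rightarrow> nat \<Rightarrow> (nat \<Rightarrow> 'a \<Rightarrow> real) \<Rightarrow> ('a \<Rightarrow> real) \<Rightarrow> (nat \<Rightarrow> 'a \<Rightarrow> real)
     \<Rightarrow> (nat \<Rightarrow> real) \<Rightarrow> (nat \<Rightarrow> real) \<Rightarrow> real" where
  "avg_accept \<mu> N a b \<rho> Mb \<tau> =
     (\<Sum>j=1..N. \<integral>x. accept_prob N a b \<rho> Mb \<tau> j x * \<tau> j * \<rho> j x \<partial>\<mu>)"

end

theory Submission
  imports Defs
begin

text \<open>Weighted by the proposal probability \<open>\<tau>\<^sub>j \<rho>(j,x)\<close>, the acceptance probability
  cancels to \<open>a(j,x) b(x) / M\<close>, so the average acceptance probability is exactly
  \<open>\<Sum>\<^sub>j \<beta>\<^sub>j / M\<close>. Since \<open>\<Sum>\<^sub>j M\<^sub>j = \<Sum>\<^sub>j \<tau>\<^sub>j (M\<^sub>j / \<tau>\<^sub>j)\<close> is a \<open>\<tau>\<close>-weighted mean of the ratios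
  \<open>M\<^sub>j / \<tau>\<^sub>j\<close>, it is at most their maximum \<open>M\<close>, with equality iff all ratios coincide,
  i.e. iff \<open>\<tau>\<close> is proportional to \<open>(M\<^sub>j)\<close>.\<close>

lemma weighted_mean_le_Max:
  fixes m \<tau> :: "'b \<Rightarrow> real"
  assumes "finite I" and "\<And>j. j \<in> I \<Longrightarrow> \<tau> j \<ge> 0" and "(\<Sum>j\<in>I. \<tau> j) = 1"
  shows "(\<Sum>j\<in>I. \<tau> j * m j) \<le> Max (m ` I)"
proof -
  have "(\<Sum>j\<in>I. \<tau> j * m j) \<le> (\<Sum>j\<in>I. \<tau> j * Max (m ` I))"
    using assms by (intro sum_mono mult_left_mono) auto
  also have "\<dots> = Max (m ` I)"
    using assms(3) by (simp add: sum_distrib_right[symmetric])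
  finally show ?thesis .
qed

lemma weighted_mean_eq_Max_iff:
  fixes m \<tau> :: "'b \<Rightarrow> real"
  assumes "finite I" and \<tau>_pos: "\<And>j. j \<in> I \<Longrightarrow> \<tau> j > 0" and \<tau>_sum: "(\<Sum>j\<in>I. \<tau> j) = 1"
  shows "(\<Sum>j\<in>I. \<tau> j * m j) = Max (m ` I) \<longleftrightarrow> (\<forall>j\<in>I. m j = Max (m ` I))"
proof -
  define M where "M = Max (m ` I)"
  have m_le: "m j \<le> M" if "j \<in> I" for j
    using \<open>finite I\<close> that unfolding M_def by simp
  have terms_nonneg: "0 \<le> \<tau> j * (M - m j)" if "j \<in> I" for j
    using \<tau>_pos[OF that] m_le[OF that] by simp
  have "M - (\<Sum>j\<in>I. \<tau> j * m j) = (\<Sum>j\<in>I. \<tau> j * (M - m j))"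
    using \<tau>_sum by (simp add: right_diff_distrib sum_subtractf sum_distrib_right[symmetric])
  also have "\<dots> = 0 \<longleftrightarrow> (\<forall>j\<in>I. \<tau> j * (M - m j) = 0)"
    using \<open>finite I\<close> terms_nonneg by (rule sum_nonneg_eq_0_iff)
  also have "\<dots> \<longleftrightarrow> (\<forall>j\<in>I. m j = M)"
    using \<tau>_pos by (metis less_irrefl mult_eq_0_iff right_minus_eq)
  finally show ?thesis
    unfolding M_def by linarith
qed

lemma sum_eq_weighted_ratios:
  fixes Mb \<tau> :: "'b \<Rightarrow> real"
  assumes "\<And>j. j \<in> I \<Longrightarrow> \<tau> j \<noteq> 0"
  shows "(\<Sum>j\<in>I. Mb j) = (\<Sum>j\<in>I. \<tau> j * (Mb j / \<tau> j))"
  using assms by (intro sum.cong) auto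

lemma sum_le_Mmax:
  assumes "\<And>j. j \<in> {1..N} \<Longrightarrow> \<tau> j > 0" and "(\<Sum>j=1..N. \<tau> j) = 1"
  shows "(\<Sum>j=1..N. Mb j) \<le> Mmax N Mb \<tau>"
proof -
  have "(\<Sum>j=1..N. Mb j) = (\<Sum>j=1..N. \<tau> j * (Mb j / \<tau> j))"
    using assms(1) by (intro sum_eq_weighted_ratios) force
  also have "\<dots> \<le> Mmax N Mb \<tau>"
    unfolding Mmax_def using assms by (intro weighted_mean_le_Max) (auto intro: less_imp_le)
  finally show ?thesis .
qed

lemma sum_eq_Mmax_iff_proportional:
  assumes \<tau>_pos: "\<And>j. j \<in> {1..N} \<Longrightarrow> \<tau> j > 0" and \<tau>_sum: "(\<Sum>j=1..N. \<tau> j) = 1"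
    and S_nz: "(\<Sum>j=1..N. Mb j) \<noteq> 0"
  shows "(\<Sum>j=1..N. Mb j) = Mmax N Mb \<tau> \<longleftrightarrow> (\<exists>c. \<forall>j\<in>{1..N}. \<tau> j = c * Mb j)"
proof -
  define M where "M = Mmax N Mb \<tau>"
  have S_eq: "(\<Sum>j=1..N. Mb j) = (\<Sum>j=1..N. \<tau> j * (Mb j / \<tau> j))"
    using \<tau>_pos by (intro sum_eq_weighted_ratios) force
  have ratios_eq_iff: "(\<Sum>j=1..N. Mb j) = M \<longleftrightarrow> (\<forall>j\<in>{1..N}. Mb j / \<tau> j = M)"
    unfolding S_eq M_def Mmax_def using \<tau>_pos \<tau>_sum by (intro weighted_mean_eq_Max_iff) auto
  show ?thesis
    unfolding M_def[symmetric]
  proof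
    assume S_M: "(\<Sum>j=1..N. Mb j) = M"
    have "\<tau> j = (1 / M) * Mb j" if "j \<in> {1..N}" for j
    proof -
      have "Mb j / \<tau> j = M"
        using S_M ratios_eq_iff that by blast
      then show ?thesis
        using \<tau>_pos[OF that] S_M S_nz by (auto simp: field_simps)
    qed
    then show "\<exists>c. \<forall>j\<in>{1..N}. \<tau> j = c * Mb j" by blast
  next
    assume "\<exists>c. \<forall>j\<in>{1..N}. \<tau> j = c * Mb j"
    then obtain c where c: "\<And>j. j \<in> {1..N} \<Longrightarrow> \<tau> j = c * Mb j" by blast
    have ratio: "Mb j / \<tau> j = 1 / c" if "j \<in> {1..N}" for j
      using c[OF that] \<tau>_pos[OF that] by (auto simp: field_simps)
    have "{1..N} \<noteq> {}"
      using \<tau>_sum by (metis sum.empty zero_neq_one)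
    then have "(\<lambda>j. Mb j / \<tau> j) ` {1..N} = {1 / c}"
      using ratio by auto
    then have "M = 1 / c"
      unfolding M_def Mmax_def by simp
    then show "(\<Sum>j=1..N. Mb j) = M"
      using ratios_eq_iff ratio by simp
  qed
qed

lemma integral_le_bound_of_proposal_density:
  fixes f \<rho> :: "'a \<Rightarrow> real"
  assumes "integrable \<mu> f" and "integrable \<mu> \<rho>" and "(\<integral>x. \<rho> x \<partial>\<mu>) = 1"
    and "\<And>x. x \<in> space \<mu> \<Longrightarrow> f x \<le> C * \<rho> x"
  shows "(\<integral>x. f x \<partial>\<mu>) \<le> C"
proof -
  have "(\<integral>x. f x \<partial>\<mu>) \<le> (\<integral>x. C * \<rho> x \<partial>\<mu>)"
    using assms by (intro integral_mono) auto
  then show ?thesis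
    using assms(3) by simp
qed

lemma accept_prob_times_proposal:
  assumes "\<tau> j \<noteq> 0" and "Mmax N Mb \<tau> \<noteq> 0"
    and "0 \<le> a j x * b x" and "a j x * b x \<le> Mb j * \<rho> j x"
  shows "accept_prob N a b \<rho> Mb \<tau> j x * \<tau> j * \<rho> j x = a j x * b x / Mmax N Mb \<tau>"
proof (cases "\<rho> j x = 0")
  case True
  then have "a j x * b x = 0"
    using assms(3,4) by simp
  then show ?thesis
    using True by (simp add: accept_prob_def)
next
  case False
  then show ?thesis
    using assms(1,2) by (simp add: accept_prob_def field_simps)
qed

lemma avg_accept_eq:
  assumes "\<And>j. j \<in> {1..N} \<Longrightarrow> \<tau> j \<noteq> 0" and "Mmax N Mb \<tau> \<noteq> 0"
    and "\<And>j x. j \<in> {1..N} \<Longrightarrow> x \<in> space \<mu> \<Longrightarrow> 0 \<le> a j x * b x"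
    and "\<And>j x. j \<in> {1..N} \<Longrightarrow> x \<in> space \<mu> \<Longrightarrow> a j x * b x \<le> Mb j * \<rho> j x"
  shows "avg_accept \<mu> N a b \<rho> Mb \<tau> = (\<Sum>j=1..N. \<integral>x. a j x * b x \<partial>\<mu>) / Mmax N Mb \<tau>"
proof -
  have "avg_accept \<mu> N a b \<rho> Mb \<tau> = (\<Sum>j=1..N. \<integral>x. a j x * b x / Mmax N Mb \<tau> \<partial>\<mu>)"
    unfolding avg_accept_def using assms
    by (intro sum.cong Bochner_Integration.integral_cong accept_prob_times_proposal) auto
  then show ?thesis
    by (simp add: sum_divide_distrib)
qed

theorem lemma1:
  fixes \<mu> :: "'a measure" and N :: nat
    and a :: "nat \<Rightarrow> 'a \<Rightarrow> real" and b :: "'a \<Rightarrow> real"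
    and \<rho> :: "nat \<Rightarrow> 'a \<Rightarrow> real" and Mb :: "nat \<Rightarrow> real" and \<tau> :: "nat \<Rightarrow> real"
    and \<beta> :: "nat \<Rightarrow> real"
  assumes N: "N \<ge> 1"
    and a_meas: "\<And>j. j \<in> {1..N} \<Longrightarrow> a j \<in> borel_measurable \<mu>"
    and a_nonneg: "\<And>j x. j \<in> {1..N} \<Longrightarrow> x \<in> space \<mu> \<Longrightarrow> a j x \<ge> 0"
    and a_int: "\<And>j. j \<in> {1..N} \<Longrightarrow> integrable \<mu> (a j)"
    and a_dens: "\<And>j. j \<in> {1..N} \<Longrightarrow> (\<integral>x. a j x \<partial>\<mu>) = 1"
    and b_meas: "b \<in> borel_measurable \<mu>"
    and b_nonneg: "\<And>x. x \<in> space \<mu> \<Longrightarrow> b x \<ge> 0"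
    and ab_int: "\<And>j. j \<in> {1..N} \<Longrightarrow> integrable \<mu> (\<lambda>x. a j x * b x)"
    and \<beta>_def: "\<And>j. j \<in> {1..N} \<Longrightarrow> \<beta> j = (\<integral>x. a j x * b x \<partial>\<mu>)"
    and \<beta>_pos: "(\<Sum>j=1..N. \<beta> j) > 0"
    and \<rho>_meas: "\<And>j. j \<in> {1..N} \<Longrightarrow> \<rho> j \<in> borel_measurable \<mu>"
    and \<rho>_nonneg: "\<And>j x. j \<in> {1..N} \<Longrightarrow> x \<in> space \<mu> \<Longrightarrow> \<rho> j x \<ge> 0"
    and \<rho>_int: "\<And>j. j \<in> {1..N} \<Longrightarrow> integrable \<mu> (\<rho> j)"
    and \<rho>_dens: "\<And>j. j \<in> {1..N} \<Longrightarrow> (\<integral>x. \<rho> j x \<partial>\<mu>) = 1"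
    and M_bound: "\<And>j x. j \<in> {1..N} \<Longrightarrow> x \<in> space \<mu> \<Longrightarrow> a j x * b x \<le> Mb j * \<rho> j x"
    and \<tau>_pos: "\<And>j. j \<in> {1..N} \<Longrightarrow> \<tau> j > 0"
    and \<tau>_sum: "(\<Sum>j=1..N. \<tau> j) = 1"
  shows "avg_accept \<mu> N a b \<rho> Mb \<tau> \<le> (\<Sum>j=1..N. \<beta> j) / (\<Sum>j=1..N. Mb j)
       \<and> (avg_accept \<mu> N a b \<rho> Mb \<tau> = (\<Sum>j=1..N. \<beta> j) / (\<Sum>j=1..N. Mb j)
            \<longleftrightarrow> (\<exists>c. \<forall>j\<in>{1..N}. \<tau> j = c * Mb j))"
proof -
  define B where "B = (\<Sum>j=1..N. \<beta> j)"
  define S where "S = (\<Sum>j=1..N. Mb j)"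
  define M where "M = Mmax N Mb \<tau>"
  have "\<beta> j \<le> Mb j" if "j \<in> {1..N}" for j
    unfolding \<beta>_def[OF that] using that
    by (intro integral_le_bound_of_proposal_density[OF ab_int \<rho>_int \<rho>_dens M_bound])
  then have "B \<le> S"
    unfolding B_def S_def by (intro sum_mono)
  moreover have "S \<le> M"
    unfolding S_def M_def using \<tau>_pos \<tau>_sum by (rule sum_le_Mmax)
  ultimately have pos: "0 < B" "0 < S" "0 < M"
    using \<beta>_pos unfolding B_def by linarith+
  have avg: "avg_accept \<mu> N a b \<rho> Mb \<tau> = B / M"
    unfolding B_def M_def using \<tau>_pos pos(3) a_nonneg b_nonneg M_bound
    by (subst avg_accept_eq) (force simp: \<beta>_def M_def)+
  have "B / M \<le> B / S"
    using pos \<open>S \<le> M\<close> by (intro divide_left_mono) auto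
  moreover have "B / M = B / S \<longleftrightarrow> S = M"
    using pos by (auto simp: field_simps)
  moreover have "S = M \<longleftrightarrow> (\<exists>c. \<forall>j\<in>{1..N}. \<tau> j = c * Mb j)"
    using \<tau>_pos \<tau>_sum pos(2) unfolding S_def M_def
    by (intro sum_eq_Mmax_iff_proportional) auto
  ultimately show ?thesis
    using avg unfolding B_def S_def by simp
qed

end
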